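(* Let $k\ge1$ be an integer and $\rho\in(0,1)$. The function $\tilde\rho$ is convex on $[1,+\infty)$. Consequently, for every $C\in[1,C_*]$, $$\tilde\rho(C)\le\frac{C_*-C}{C_*-1}\rho^k+\frac{C-1}{C_*-1}\rho_*.$$
   Context: $\mathbb{R}_k[X]$ denotes real polynomials of degree at most $k$, and $\|p\|_1$ is the sum of absolute values of the coefficients of $p$. For $C\ge1$, $\tilde\rho(C)=\min\{\max_{x\in[0,\rho]}|p(x)| : p\in\mathbb{R}_k[X],\ p(1)=1,\ \|p\|_1\le C\}$. Let $T_k$ be the Chebyshev polynomial of the first kind of degree $k$, $p_*(X)=T_k(\tfrac{2X-\rho}{\rho})/|T_k(\tfrac{2-\rho}{\rho})|$ (the minimizer of $\max_{[0,\rho]}|p|$ over $p\in\mathbb{R}_k[X]$ with $p(1)=1$), $C_*=\|p_*\|_1$, and $\rho_*=\frac{2\beta^k}{1+\beta^{2k}}$ with $\beta=\frac{1-\sqrt{1-\rho}}{1+\sqrt{1-\rho}}$ (the optimal value of that unconstrained problem). *)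

theory Defs
  imports "HOL-Analysis.Analysis" "HOL-Computational_Algebra.Polynomial"
begin

fun cheb_T :: "nat \<Rightarrow> real poly" where
  "cheb_T 0 = 1"
| "cheb_T (Suc 0) = [:0, 1:]"
| "cheb_T (Suc (Suc n)) = [:0, 2:] * cheb_T (Suc n) - cheb_T n"

definition l1_norm :: "real poly \<Rightarrow> real" where
  "l1_norm p = (\<Sum>i\<le>degree p. \<bar>coeff p i\<bar>)"

definition sup_norm_on :: "real \<Rightarrow> real poly \<Rightarrow> real" where
  "sup_norm_on \<rho> p = (SUP x\<in>{0..\<rho>}. \<bar>poly p x\<bar>)"

text \<open>rho tilde (C): the constrained minimum (taken as an infimum; it is attained).\<close>
definition rho_tilde :: "nat \<Rightarrow> real \<Rightarrow> real \<Rightarrow> real" where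
  "rho_tilde k \<rho> C = (INF p\<in>{p. degree p \<le> k \<and> poly p 1 = 1 \<and> l1_norm p \<le> C}. sup_norm_on \<rho> p)"

definition p_star :: "nat \<Rightarrow> real \<Rightarrow> real poly" where
  "p_star k \<rho> = smult (1 / \<bar>poly (cheb_T k) ((2 - \<rho>) / \<rho>)\<bar>)
                     (pcompose (cheb_T k) [: -1, 2 / \<rho> :])"

definition C_star :: "nat \<Rightarrow> real \<Rightarrow> real" where
  "C_star k \<rho> = l1_norm (p_star k \<rho>)"

definition beta_rho :: "real \<Rightarrow> real" where
  "beta_rho \<rho> = (1 - sqrt (1 - \<rho>)) / (1 + sqrt (1 - \<rho>))"

definition rho_star :: "nat \<Rightarrow> real \<Rightarrow> real" where
  "rho_star k \<rho> = 2 * beta_rho \<rho> ^ k / (1 + beta_rho \<rho> ^ (2 * k))"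

end

theory Submission
  imports Defs
begin

text \<open>
  Both the l1 norm of the coefficients and the sup norm on [0, \<rho>] are seminorms, so a convex
  combination of admissible polynomials for the budgets C and D is admissible for the combined
  budget, with sup norm at most the combined sup norms; passing to infima, \<open>rho_tilde\<close> is convex.
  The bound then interpolates between C = 1, where X^k is admissible with sup norm \<rho>^k, and
  C = C_*, where p_* is admissible with sup norm \<rho>_* = 1 / T_k((2 - \<rho>)/\<rho>). The interpolation
  needs C_* > 1: a polynomial with l1 norm 1 = p(1) has nonnegative coefficients, whereas p_*
  is negative where T_k((2X - \<rho>)/\<rho>) = T_k(cos(\<pi>/k)) = -1.
\<close>

lemma poly_cheb_T_cos: "poly (cheb_T n) (cos t) = cos (real n * t)"
proof (induction n rule: cheb_T.induct)
  case (3 n)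
  have "cos (real (Suc (Suc n)) * t) + cos (real n * t) = 2 * cos t * cos (real (Suc n) * t)"
  proof -
    have "real (Suc (Suc n)) * t = real (Suc n) * t + t" "real n * t = real (Suc n) * t - t"
      by (simp_all add: algebra_simps)
    then show ?thesis by (simp add: cos_add cos_diff)
  qed
  then show ?case using 3 by (simp add: algebra_simps)
qed auto

lemma poly_cheb_T_cosh:
  fixes z :: real
  assumes "z \<noteq> 0"
  shows "poly (cheb_T n) ((z + 1 / z) / 2) = (z ^ n + 1 / z ^ n) / 2"
proof (induction n rule: cheb_T.induct)
  case (3 n)
  have recurrence: "poly (cheb_T (Suc (Suc n))) y = 2 * y * poly (cheb_T (Suc n)) y - poly (cheb_T n) y"
    for y by simp
  show ?case
    unfolding recurrence 3 using assms by (simp add: field_simps)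
qed auto

lemma abs_poly_cheb_T_le_1:
  assumes "\<bar>y\<bar> \<le> 1"
  shows "\<bar>poly (cheb_T n) y\<bar> \<le> 1"
  using poly_cheb_T_cos[of n "arccos y"] cos_arccos_abs[OF assms] by simp

lemma degree_cheb_T_le: "degree (cheb_T n) \<le> n"
proof (induction n rule: cheb_T.induct)
  case (3 n)
  have "degree ([:0, 2:] * cheb_T (Suc n)) \<le> Suc (Suc n)"
    by (rule order.trans[OF degree_mult_le]) (use 3 in auto)
  moreover have "degree (cheb_T n) \<le> Suc (Suc n)" using 3 by simp
  ultimately show ?case by (simp add: degree_diff_le)
qed auto

lemma l1_norm_eq_sum:
  assumes "degree p \<le> n"
  shows "l1_norm p = (\<Sum>i\<le>n. \<bar>coeff p i\<bar>)"
  unfolding l1_norm_def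
  by (rule sum.mono_neutral_left) (use assms in \<open>auto simp: coeff_eq_0\<close>)

lemma l1_norm_add_le: "l1_norm (p + q) \<le> l1_norm p + l1_norm q"
proof -
  define n where "n = max (degree p) (degree q)"
  have "degree p \<le> n" "degree q \<le> n" "degree (p + q) \<le> n"
    by (simp_all add: n_def degree_add_le)
  then show ?thesis
    by (simp add: l1_norm_eq_sum sum.distrib[symmetric] sum_mono abs_triangle_ineq)
qed

lemma l1_norm_smult: "l1_norm (smult c p) = \<bar>c\<bar> * l1_norm p"
  using l1_norm_eq_sum[OF degree_smult_le, of c p]
  by (simp add: l1_norm_def abs_mult sum_distrib_left)

lemma abs_poly_le_l1_norm:
  fixes p :: "real poly"
  assumes "\<bar>x\<bar> \<le> 1"
  shows "\<bar>poly p x\<bar> \<le> l1_norm p"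
proof -
  have "\<bar>poly p x\<bar> \<le> (\<Sum>i\<le>degree p. \<bar>coeff p i * x ^ i\<bar>)"
    unfolding poly_altdef by (rule sum_abs)
  also have "\<dots> \<le> l1_norm p"
    unfolding l1_norm_def abs_mult power_abs
    by (intro sum_mono mult_left_le) (use assms in \<open>auto intro: power_le_one\<close>)
  finally show ?thesis .
qed

lemma coeff_nonneg_if_l1_norm_eq_poly_1:
  fixes p :: "real poly"
  assumes "l1_norm p = poly p 1"
  shows "0 \<le> coeff p i"
proof (cases "i \<le> degree p")
  case True
  have "(\<Sum>i\<le>degree p. \<bar>coeff p i\<bar> - coeff p i) = 0"
    using assms by (simp add: poly_altdef l1_norm_def sum_subtractf)
  then have "\<bar>coeff p i\<bar> - coeff p i = 0"
    using True by (subst (asm) sum_nonneg_eq_0_iff) auto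
  then show ?thesis by (metis abs_ge_zero eq_iff_diff_eq_0)
qed (simp add: coeff_eq_0)

lemma poly_nonneg_if_l1_norm_eq_poly_1:
  fixes p :: "real poly"
  assumes "l1_norm p = poly p 1" "0 \<le> x"
  shows "0 \<le> poly p x"
  unfolding poly_altdef
  using coeff_nonneg_if_l1_norm_eq_poly_1[OF assms(1)] assms(2) by (simp add: sum_nonneg)

lemma bdd_above_abs_poly_Icc: "bdd_above ((\<lambda>x. \<bar>poly p x\<bar>) ` {0..(r::real)})"
  by (intro bounded_imp_bdd_above compact_imp_bounded compact_continuous_image continuous_intros)
    auto

lemma abs_poly_le_sup_norm_on: "x \<in> {0..r} \<Longrightarrow> \<bar>poly p x\<bar> \<le> sup_norm_on r p"
  unfolding sup_norm_on_def by (rule cSUP_upper[OF _ bdd_above_abs_poly_Icc])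

lemma sup_norm_on_le:
  "0 \<le> r \<Longrightarrow> (\<And>x. x \<in> {0..r} \<Longrightarrow> \<bar>poly p x\<bar> \<le> B) \<Longrightarrow> sup_norm_on r p \<le> B"
  unfolding sup_norm_on_def by (rule cSUP_least) auto

lemma sup_norm_on_nonneg: "0 \<le> r \<Longrightarrow> 0 \<le> sup_norm_on r p"
  using abs_poly_le_sup_norm_on[of 0 r p] by auto

lemma sup_norm_on_add_le:
  assumes "0 \<le> r"
  shows "sup_norm_on r (p + q) \<le> sup_norm_on r p + sup_norm_on r q"
proof (rule sup_norm_on_le[OF assms])
  fix x assume "x \<in> {0..r}"
  then show "\<bar>poly (p + q) x\<bar> \<le> sup_norm_on r p + sup_norm_on r q"
    using abs_poly_le_sup_norm_on[of x r p] abs_poly_le_sup_norm_on[of x r q]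
    by (simp add: abs_triangle_ineq order.trans[OF abs_triangle_ineq])
qed

lemma sup_norm_on_smult_le:
  assumes "0 \<le> r"
  shows "sup_norm_on r (smult c p) \<le> \<bar>c\<bar> * sup_norm_on r p"
proof (rule sup_norm_on_le[OF assms])
  fix x assume "x \<in> {0..r}"
  then show "\<bar>poly (smult c p) x\<bar> \<le> \<bar>c\<bar> * sup_norm_on r p"
    using abs_poly_le_sup_norm_on[of x r p] by (simp add: abs_mult mult_left_mono)
qed

definition admissible_polys :: "nat \<Rightarrow> real \<Rightarrow> real poly set" where
  "admissible_polys k C = {p. degree p \<le> k \<and> poly p 1 = 1 \<and> l1_norm p \<le> C}"

lemma rho_tilde_eq_INF: "rho_tilde k r C = (INF p\<in>admissible_polys k C. sup_norm_on r p)"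
  unfolding rho_tilde_def admissible_polys_def ..

lemma monom_admissible: "1 \<le> C \<Longrightarrow> monom 1 k \<in> admissible_polys k C"
  by (auto simp: admissible_polys_def degree_monom_le poly_monom l1_norm_def coeff_monom)

lemma convex_combination_admissible:
  assumes "p \<in> admissible_polys k C" "q \<in> admissible_polys k D" "0 \<le> t" "t \<le> 1"
  shows "smult (1 - t) p + smult t q \<in> admissible_polys k ((1 - t) * C + t * D)"
proof -
  have "degree (smult (1 - t) p + smult t q) \<le> k"
    using assms(1,2) unfolding admissible_polys_def
    by (intro degree_add_le order.trans[OF degree_smult_le]) auto
  moreover have "l1_norm (smult (1 - t) p + smult t q) \<le> (1 - t) * C + t * D"
  proof -
    have "l1_norm (smult (1 - t) p + smult t q) \<le> (1 - t) * l1_norm p + t * l1_norm q"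
      using l1_norm_add_le[of "smult (1 - t) p" "smult t q"] assms(3,4)
      by (simp add: l1_norm_smult)
    also have "\<dots> \<le> (1 - t) * C + t * D"
      using assms by (intro add_mono mult_left_mono) (auto simp: admissible_polys_def)
    finally show ?thesis .
  qed
  ultimately show ?thesis
    using assms(1,2) by (simp add: admissible_polys_def algebra_simps)
qed

lemma bdd_below_sup_norm_on: "0 \<le> r \<Longrightarrow> bdd_below (sup_norm_on r ` A)"
  by (rule bdd_belowI[of _ 0]) (auto simp: sup_norm_on_nonneg)

lemma rho_tilde_le_sup_norm_on:
  "0 \<le> r \<Longrightarrow> p \<in> admissible_polys k C \<Longrightarrow> rho_tilde k r C \<le> sup_norm_on r p"
  unfolding rho_tilde_eq_INF by (intro cINF_lower bdd_below_sup_norm_on)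

lemma rho_tilde_approx:
  assumes "0 \<le> r" "1 \<le> C" "0 < e"
  obtains p where "p \<in> admissible_polys k C" "sup_norm_on r p < rho_tilde k r C + e"
proof -
  have "(INF p\<in>admissible_polys k C. sup_norm_on r p) < rho_tilde k r C + e"
    using assms(3) by (simp add: rho_tilde_eq_INF)
  then show ?thesis
    using that monom_admissible[OF assms(2)]
    by (subst (asm) cINF_less_iff[OF _ bdd_below_sup_norm_on[OF assms(1)]]) auto
qed

lemma convex_on_rho_tilde:
  assumes "0 \<le> r"
  shows "convex_on {1..} (rho_tilde k r)"
proof (rule convex_onI)
  fix t C D :: real
  assume t: "0 < t" "t < 1" and CD: "C \<in> {1..}" "D \<in> {1..}"
  show "rho_tilde k r ((1 - t) *\<^sub>R C + t *\<^sub>R D) \<le> (1 - t) * rho_tilde k r C + t * rho_tilde k r D"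
  proof (rule field_le_epsilon)
    fix e :: real assume "0 < e"
    with assms CD obtain p q
      where p: "p \<in> admissible_polys k C" "sup_norm_on r p < rho_tilde k r C + e"
        and q: "q \<in> admissible_polys k D" "sup_norm_on r q < rho_tilde k r D + e"
      by (metis atLeast_iff rho_tilde_approx)
    have "rho_tilde k r ((1 - t) *\<^sub>R C + t *\<^sub>R D) \<le> sup_norm_on r (smult (1 - t) p + smult t q)"
      using convex_combination_admissible[OF p(1) q(1)] t
      by (simp add: rho_tilde_le_sup_norm_on assms)
    also have "\<dots> \<le> sup_norm_on r (smult (1 - t) p) + sup_norm_on r (smult t q)"
      by (rule sup_norm_on_add_le[OF assms])
    also have "\<dots> \<le> (1 - t) * sup_norm_on r p + t * sup_norm_on r q"
    proof (intro add_mono)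
      show "sup_norm_on r (smult (1 - t) p) \<le> (1 - t) * sup_norm_on r p"
        using sup_norm_on_smult_le[OF assms, of "1 - t" p] t by (simp add: abs_of_pos)
      show "sup_norm_on r (smult t q) \<le> t * sup_norm_on r q"
        using sup_norm_on_smult_le[OF assms, of t q] t by (simp add: abs_of_pos)
    qed
    also have "\<dots> \<le> (1 - t) * (rho_tilde k r C + e) + t * (rho_tilde k r D + e)"
      using p(2) q(2) t by (intro add_mono mult_left_mono) auto
    finally show "rho_tilde k r ((1 - t) *\<^sub>R C + t *\<^sub>R D)
        \<le> (1 - t) * rho_tilde k r C + t * rho_tilde k r D + e"
      by (simp add: algebra_simps)
  qed
qed (simp add: convex_real_interval)

lemma rho_tilde_1_le:
  assumes "0 \<le> r"
  shows "rho_tilde k r 1 \<le> r ^ k"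
proof -
  have "rho_tilde k r 1 \<le> sup_norm_on r (monom 1 k)"
    by (rule rho_tilde_le_sup_norm_on[OF assms monom_admissible]) simp
  also have "\<dots> \<le> r ^ k"
    by (rule sup_norm_on_le[OF assms]) (auto simp: poly_monom intro: power_mono)
  finally show ?thesis .
qed

lemma beta_rho_pos: "0 < r \<Longrightarrow> r < 1 \<Longrightarrow> 0 < beta_rho r"
  by (simp add: beta_rho_def real_sqrt_less_iff add_pos_nonneg)

lemma beta_rho_cosh:
  assumes "0 < r" "r < 1"
  shows "(2 - r) / r = (1 / beta_rho r + beta_rho r) / 2"
proof -
  define s where "s = sqrt (1 - r)"
  have s: "0 \<le> s" "s < 1" and r: "r = 1 - s * s"
    using assms by (auto simp: s_def real_sqrt_less_iff)
  have "s * s < 1"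
    using s mult_right_mono[of s 1 s] by linarith
  then show ?thesis
    unfolding beta_rho_def s_def[symmetric] r using s by (simp add: field_simps)
qed

lemma poly_cheb_T_rho_star:
  assumes "0 < r" "r < 1"
  shows "poly (cheb_T k) ((2 - r) / r) = 1 / rho_star k r"
proof -
  have b: "0 < beta_rho r" by (rule beta_rho_pos[OF assms])
  have "poly (cheb_T k) ((2 - r) / r) = ((1 / beta_rho r) ^ k + beta_rho r ^ k) / 2"
    using poly_cheb_T_cosh[of "1 / beta_rho r" k] b
    by (simp add: beta_rho_cosh[OF assms] power_one_over)
  also have "\<dots> = 1 / rho_star k r"
    using b by (simp add: rho_star_def field_simps power_mult power2_eq_square power_one_over)
  finally show ?thesis .
qed

lemma rho_star_pos: "0 < r \<Longrightarrow> r < 1 \<Longrightarrow> 0 < rho_star k r"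
  using beta_rho_pos[of r] by (simp add: rho_star_def add_pos_pos)

lemma poly_p_star:
  assumes "0 < r" "r < 1"
  shows "poly (p_star k r) x = rho_star k r * poly (cheb_T k) (2 * x / r - 1)"
  using rho_star_pos[OF assms, of k]
  by (simp add: p_star_def poly_pcompose poly_cheb_T_rho_star[OF assms] algebra_simps)

lemma degree_p_star_le: "degree (p_star k r) \<le> k"
  unfolding p_star_def
  by (rule order.trans[OF degree_smult_le]) (simp add: degree_pcompose degree_cheb_T_le)

lemma poly_p_star_1:
  assumes "0 < r" "r < 1"
  shows "poly (p_star k r) 1 = 1"
proof -
  have "2 * 1 / r - 1 = (2 - r) / r"
    using assms by (simp add: field_simps)
  then show ?thesis
    using rho_star_pos[OF assms, of k]
    by (simp only: poly_p_star[OF assms] poly_cheb_T_rho_star[OF assms]) simp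
qed

lemma sup_norm_on_p_star_le:
  assumes "0 < r" "r < 1"
  shows "sup_norm_on r (p_star k r) \<le> rho_star k r"
proof (rule sup_norm_on_le)
  fix x assume "x \<in> {0..r}"
  then have "\<bar>2 * x / r - 1\<bar> \<le> 1"
    using assms by (auto simp: abs_le_iff field_simps)
  then show "\<bar>poly (p_star k r) x\<bar> \<le> rho_star k r"
    using abs_poly_cheb_T_le_1 rho_star_pos[OF assms, of k]
    by (simp add: poly_p_star[OF assms] abs_mult mult_left_le)
qed (use assms in simp)

lemma p_star_admissible:
  "0 < r \<Longrightarrow> r < 1 \<Longrightarrow> p_star k r \<in> admissible_polys k (C_star k r)"
  by (simp add: admissible_polys_def C_star_def degree_p_star_le poly_p_star_1)

lemma C_star_gt_1:
  assumes "0 < r" "r < 1" "1 \<le> k"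
  shows "1 < C_star k r"
proof -
  define x where "x = r * (1 + cos (pi / k)) / 2"
  have "0 \<le> 1 + cos (pi / k)"
    using cos_ge_minus_one[of "pi / k"] by linarith
  then have "0 \<le> x"
    using assms by (simp add: x_def)
  have "2 * x / r - 1 = cos (pi / k)"
    using assms by (simp add: x_def field_simps)
  then have "poly (p_star k r) x = - rho_star k r"
    using assms by (simp add: poly_p_star poly_cheb_T_cos)
  then have "poly (p_star k r) x < 0"
    using rho_star_pos[OF assms(1,2)] by simp
  then have "l1_norm (p_star k r) \<noteq> poly (p_star k r) 1"
    using poly_nonneg_if_l1_norm_eq_poly_1[of "p_star k r" x] \<open>0 \<le> x\<close> by linarith
  then have "C_star k r \<noteq> 1"
    using poly_p_star_1[OF assms(1,2), of k] by (simp add: C_star_def)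
  moreover have "1 \<le> C_star k r"
    using abs_poly_le_l1_norm[of 1 "p_star k r"] poly_p_star_1[OF assms(1,2)]
    by (simp add: C_star_def)
  ultimately show ?thesis by simp
qed

lemma convex_on_le_chord:
  fixes f :: "real \<Rightarrow> real"
  assumes "convex_on {a..b} f" "a < b" "c \<in> {a..b}" "f a \<le> A" "f b \<le> B"
  shows "f c \<le> (b - c) / (b - a) * A + (c - a) / (b - a) * B"
proof -
  define t where "t = (c - a) / (b - a)"
  have t: "0 \<le> t" "t \<le> 1"
    using assms(2,3) by (auto simp: t_def field_simps)
  have "t * (b - a) = c - a"
    using assms(2) by (simp add: t_def)
  then have c: "c = (1 - t) *\<^sub>R a + t *\<^sub>R b"
    by (simp add: algebra_simps)
  have "f c \<le> (1 - t) * f a + t * f b"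
    by (subst c) (rule convex_onD_Icc[OF assms(1) less_imp_le[OF assms(2)] t(1,2)])
  also have "\<dots> \<le> (1 - t) * A + t * B"
    using assms(4,5) t by (intro add_mono mult_left_mono) auto
  also have "\<dots> = (b - c) / (b - a) * A + (c - a) / (b - a) * B"
    using assms(2) by (simp add: t_def divide_simps)
  finally show ?thesis .
qed

theorem lemma1:
  fixes k :: nat and \<rho> :: real
  assumes "k \<ge> 1" and "0 < \<rho>" and "\<rho> < 1"
  shows "convex_on {1..} (rho_tilde k \<rho>) \<and>
         (\<forall>C\<in>{1..C_star k \<rho>}.
            rho_tilde k \<rho> C \<le> (C_star k \<rho> - C) / (C_star k \<rho> - 1) * \<rho> ^ k
                              + (C - 1) / (C_star k \<rho> - 1) * rho_star k \<rho>)"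
proof (intro conjI ballI)
  have "0 \<le> \<rho>" using assms(2) by simp
  then show convex: "convex_on {1..} (rho_tilde k \<rho>)"
    by (rule convex_on_rho_tilde)
  fix C assume "C \<in> {1..C_star k \<rho>}"
  have "rho_tilde k \<rho> (C_star k \<rho>) \<le> rho_star k \<rho>"
    using rho_tilde_le_sup_norm_on[OF \<open>0 \<le> \<rho>\<close> p_star_admissible[OF assms(2,3), of k]]
      sup_norm_on_p_star_le[OF assms(2,3), of k] by simp
  show "rho_tilde k \<rho> C \<le> (C_star k \<rho> - C) / (C_star k \<rho> - 1) * \<rho> ^ k
                              + (C - 1) / (C_star k \<rho> - 1) * rho_star k \<rho>"
  proof (rule convex_on_le_chord)
    show "convex_on {1..C_star k \<rho>} (rho_tilde k \<rho>)"
      by (rule convex_on_subset[OF convex]) auto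
  qed (use \<open>C \<in> {1..C_star k \<rho>}\<close> \<open>rho_tilde k \<rho> (C_star k \<rho>) \<le> rho_star k \<rho>\<close>
      C_star_gt_1[OF assms(2,3,1)] rho_tilde_1_le[OF \<open>0 \<le> \<rho>\<close>] in auto)
qed

end
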